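(* Let $a:[0,\infty)\to[0,\infty)$ be non-negative and non-decreasing, let $f(x)=\exp(-\int_0^x a(y)dy)$, and for $s\ge1$ let $q_s(n)=\prod_{k=0}^n\bigl(1+\tfrac1{\sqrt s}a\bigl(\tfrac{k+1}{\sqrt s}\bigr)\bigr)^{-1}$, $n\in\mathbb N_0$. Then there is an increasing function $\psi(s)$ of $s\ge1$ with $\psi(s)\to\infty$ as $s\to\infty$ such that $q_s(n)=f\bigl(\tfrac{n+1}{\sqrt s}\bigr)\bigl(1+O(s^{-1/4})\bigr)$ for $0\le n+1\le\sqrt s\,\psi(s)$.
   Context: $q_s(n)=p_s(0)\cdots p_s(n)$ for the local admission control $p_s(k)=\bigl(1+\tfrac1{\sqrt s}a(\tfrac{k+1}{\sqrt s})\bigr)^{-1}$ of an $s$-server system. *)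

theory Defs
  imports "HOL-Analysis.Analysis"
begin

definition admission_f :: "(real \<Rightarrow> real) \<Rightarrow> real \<Rightarrow> real" where
  "admission_f a x = exp (- integral {0..x} a)"

definition admission_q :: "(real \<Rightarrow> real) \<Rightarrow> real \<Rightarrow> nat \<Rightarrow> real" where
  "admission_q a s n = (\<Prod>k\<in>{0..n}. inverse (1 + a ((real k + 1) / sqrt s) / sqrt s))"

end

theory Submission
  imports Defs
begin

text \<open>
  With h = 1/sqrt s and u_k = h a((k+1)h), the bounds u - u^2 \<le> ln (1 + u) \<le> u give
  exp (-\<Sum>u_k) \<le> q_s(n) \<le> exp (-\<Sum>u_k + \<Sum>u_k^2), and monotonicity of a places \<Sum>u_k
  between the integral of a over [0, x], x = (n+1)h, and that integral plus h a(x).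
  Hence the relative error is governed by h a(x) and (n+1) h^2 a(x)^2. Taking \<psi>(s) to be
  the largest integer m with (1+m)(1+a(m))^2 \<le> s^(1/4) makes both at most s^(-1/4) as long
  as x \<le> \<psi>(s), and \<psi>(s) \<rightarrow> \<infinity> because every fixed m eventually qualifies.
\<close>

lemma integral_mono_on_bounds:
  fixes a :: "real \<Rightarrow> real"
  assumes mono: "mono_on {c..d} a" and "c \<le> d"
  shows "a c * (d - c) \<le> integral {c..d} a" "integral {c..d} a \<le> a d * (d - c)"
proof -
  have int: "a integrable_on {c..d}" using mono by (rule integrable_on_mono_on)
  have "integral {c..d} (\<lambda>_. a c) \<le> integral {c..d} a"
    by (rule integral_le) (use int assms in \<open>auto intro!: mono_onD[OF mono]\<close>)
  then show "a c * (d - c) \<le> integral {c..d} a" using \<open>c \<le> d\<close> by (simp add: mult.commute)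
  have "integral {c..d} a \<le> integral {c..d} (\<lambda>_. a d)"
    by (rule integral_le) (use int assms in \<open>auto intro!: mono_onD[OF mono]\<close>)
  then show "integral {c..d} a \<le> a d * (d - c)" using \<open>c \<le> d\<close> by (simp add: mult.commute)
qed

lemma riemann_sums_bracket_integral:
  fixes a :: "real \<Rightarrow> real"
  assumes mono: "mono_on {0..} a" and h: "0 < h"
  shows "(\<Sum>k\<le>n. a (real k * h) * h) \<le> integral {0..(real n + 1) * h} a"
    and "integral {0..(real n + 1) * h} a \<le> (\<Sum>k\<le>n. a ((real k + 1) * h) * h)"
proof (induction n)
  case 0
  show "(\<Sum>k\<le>0. a (real k * h) * h) \<le> integral {0..(real 0 + 1) * h} a"
   and "integral {0..(real 0 + 1) * h} a \<le> (\<Sum>k\<le>0. a ((real k + 1) * h) * h)"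
    using integral_mono_on_bounds[of 0 h a] mono_on_subset[OF mono] h by auto
next
  case (Suc n)
  define x where "x = (real n + 1) * h"
  have x: "0 \<le> x" "(real (Suc n) + 1) * h = x + h" using h by (auto simp: x_def algebra_simps)
  have mono_piece: "mono_on {x..x + h} a" using mono_on_subset[OF mono] x(1) by auto
  have "integral {0..x} a + integral {x..x + h} a = integral {0..x + h} a"
    using integrable_on_mono_on[OF mono_on_subset[OF mono]] x h
    by (intro Henstock_Kurzweil_Integration.integral_combine) auto
  moreover have "a x * h \<le> integral {x..x + h} a" "integral {x..x + h} a \<le> a (x + h) * h"
    using integral_mono_on_bounds[OF mono_piece] h by auto
  ultimately show "(\<Sum>k\<le>Suc n. a (real k * h) * h) \<le> integral {0..(real (Suc n) + 1) * h} a"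
    and "integral {0..(real (Suc n) + 1) * h} a \<le> (\<Sum>k\<le>Suc n. a ((real k + 1) * h) * h)"
    using Suc.IH x by (auto simp: x_def algebra_simps)
qed

lemma prod_inverse_one_plus_exp_bounds:
  fixes u :: "'a \<Rightarrow> real"
  assumes "\<And>k. k \<in> A \<Longrightarrow> 0 \<le> u k \<and> u k \<le> 1"
  shows "exp (- (\<Sum>k\<in>A. u k)) \<le> (\<Prod>k\<in>A. inverse (1 + u k))"
    and "(\<Prod>k\<in>A. inverse (1 + u k)) \<le> exp (- (\<Sum>k\<in>A. u k) + (\<Sum>k\<in>A. (u k)\<^sup>2))"
proof -
  have "exp (- u k) \<le> inverse (1 + u k)" if "k \<in> A" for k
    using exp_ge_add_one_self[of "u k"] assms[OF that]
    by (simp add: exp_minus le_imp_inverse_le)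
  then have "(\<Prod>k\<in>A. exp (- u k)) \<le> (\<Prod>k\<in>A. inverse (1 + u k))"
    by (intro prod_mono) auto
  then show "exp (- (\<Sum>k\<in>A. u k)) \<le> (\<Prod>k\<in>A. inverse (1 + u k))"
    by (cases "finite A") (simp_all add: exp_sum[symmetric] sum_negf)
  have "inverse (1 + u k) \<le> exp (- u k + (u k)\<^sup>2)" if "k \<in> A" for k
  proof -
    have "u k - (u k)\<^sup>2 \<le> ln (1 + u k)"
      using assms[OF that] by (intro ln_one_plus_pos_lower_bound) auto
    then have "exp (u k - (u k)\<^sup>2) \<le> exp (ln (1 + u k))" by simp
    also have "\<dots> = 1 + u k" using assms[OF that] by simp
    finally have "inverse (1 + u k) \<le> inverse (exp (u k - (u k)\<^sup>2))"
      by (rule le_imp_inverse_le) simp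
    then show ?thesis by (simp add: exp_minus[symmetric])
  qed
  then have "(\<Prod>k\<in>A. inverse (1 + u k)) \<le> (\<Prod>k\<in>A. exp (- u k + (u k)\<^sup>2))"
    using assms by (intro prod_mono) (auto simp: add_nonneg_nonneg)
  then show "(\<Prod>k\<in>A. inverse (1 + u k)) \<le> exp (- (\<Sum>k\<in>A. u k) + (\<Sum>k\<in>A. (u k)\<^sup>2))"
    by (cases "finite A") (simp_all add: exp_sum[symmetric] sum_subtractf)
qed

lemma abs_diff_exp_le_of_exp_bracket:
  fixes q I \<delta> :: real
  assumes "exp (- \<delta>) * exp (- I) \<le> q" "q \<le> exp \<delta> * exp (- I)" "0 \<le> \<delta>" "\<delta> \<le> 1"
  shows "\<bar>q - exp (- I)\<bar> \<le> 2 * \<delta> * exp (- I)"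
proof -
  have "\<delta> * \<delta> \<le> \<delta>" using assms(3,4) by (simp add: mult_left_le)
  then have "exp \<delta> \<le> 1 + 2 * \<delta>"
    using exp_bound[of \<delta>] assms(3,4) by (simp add: power2_eq_square)
  moreover have "1 - \<delta> \<le> exp (- \<delta>)" using exp_ge_add_one_self[of "- \<delta>"] by simp
  ultimately have "exp \<delta> * exp (- I) \<le> (1 + 2 * \<delta>) * exp (- I)"
    and "(1 - \<delta>) * exp (- I) \<le> exp (- \<delta>) * exp (- I)"
    by (auto intro!: mult_right_mono)
  moreover have "(1 + 2 * \<delta>) * exp (- I) = exp (- I) + 2 * \<delta> * exp (- I)"
    and "(1 - \<delta>) * exp (- I) = exp (- I) - \<delta> * exp (- I)"
    and "0 \<le> \<delta> * exp (- I)"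
    using assms(3) by (simp_all add: algebra_simps)
  ultimately show ?thesis
    using assms(1,2) by (intro abs_leI) linarith+
qed

lemma prod_riemann_approx_exp_integral:
  fixes a :: "real \<Rightarrow> real"
  assumes nonneg: "\<And>x. x \<ge> 0 \<Longrightarrow> a x \<ge> 0" and mono: "mono_on {0..} a"
    and h: "0 < h" and m: "(real n + 1) * h \<le> m"
    and small: "a m * h \<le> \<delta>" and sum_sq_small: "(real n + 1) * (a m * h)\<^sup>2 \<le> \<delta>"
    and "\<delta> \<le> 1"
  shows "\<bar>(\<Prod>k\<le>n. inverse (1 + a ((real k + 1) * h) * h)) - exp (- integral {0..(real n + 1) * h} a)\<bar>
           \<le> 2 * \<delta> * exp (- integral {0..(real n + 1) * h} a)"
proof -
  define I where "I = integral {0..(real n + 1) * h} a"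
  define u where "u k = a ((real k + 1) * h) * h" for k
  have "0 \<le> (real n + 1) * h" using h by simp
  then have "0 \<le> m" using m by linarith
  have u_bounds: "0 \<le> u k \<and> u k \<le> a m * h" if "k \<le> n" for k
  proof -
    have "(real k + 1) * h \<le> (real n + 1) * h" using that h by simp
    then have "(real k + 1) * h \<le> m" using m by linarith
    then have "a ((real k + 1) * h) \<le> a m" using h \<open>0 \<le> m\<close> by (intro mono_onD[OF mono]) auto
    then show ?thesis using nonneg h by (simp add: u_def)
  qed
  have "0 \<le> \<delta>" using u_bounds[of n] small by linarith
  \<comment> \<open>upper and lower Riemann sums differ only by their end terms\<close>
  have "(\<Sum>k\<le>n. u k) + a 0 * h = (\<Sum>k\<le>n. a (real k * h) * h) + u n"
    using sum.atMost_Suc_shift[of "\<lambda>k. a (real k * h) * h" n]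
    by (simp add: sum.atMost_Suc u_def add_ac)
  moreover have "a 0 * h \<ge> 0" using nonneg h by simp
  ultimately have "(\<Sum>k\<le>n. u k) \<le> I + \<delta>"
    using riemann_sums_bracket_integral(1)[OF mono h, of n] u_bounds[of n] small
    unfolding I_def by linarith
  moreover have "I \<le> (\<Sum>k\<le>n. u k)"
    using riemann_sums_bracket_integral(2)[OF mono h, of n] unfolding I_def u_def .
  moreover have "(\<Sum>k\<le>n. (u k)\<^sup>2) \<le> \<delta>"
  proof -
    have "(\<Sum>k\<le>n. (u k)\<^sup>2) \<le> (\<Sum>k\<le>n. (a m * h)\<^sup>2)"
      using u_bounds by (intro sum_mono power_mono) auto
    then show ?thesis using sum_sq_small by (simp add: add.commute)
  qed
  moreover have u_unit: "0 \<le> u k \<and> u k \<le> 1" if "k \<in> {..n}" for k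
    using u_bounds[of k] that small \<open>\<delta> \<le> 1\<close> by auto
  moreover note prod_inverse_one_plus_exp_bounds[of "{..n}" u, OF u_unit]
  ultimately have "exp (- \<delta>) * exp (- I) \<le> (\<Prod>k\<le>n. inverse (1 + u k))"
    and "(\<Prod>k\<le>n. inverse (1 + u k)) \<le> exp \<delta> * exp (- I)"
    by (smt (verit) exp_add exp_le_cancel_iff)+
  from abs_diff_exp_le_of_exp_bracket[OF this \<open>0 \<le> \<delta>\<close> \<open>\<delta> \<le> 1\<close>]
  show ?thesis unfolding I_def u_def .
qed

text \<open>The level set is finite for non-negative \<open>a\<close>; inserting \<open>0\<close> makes \<open>Max\<close> meaningful when it is empty.\<close>

definition admission_cutoff :: "(real \<Rightarrow> real) \<Rightarrow> real \<Rightarrow> real" where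
  "admission_cutoff a s = real (Max (insert 0 {k. (1 + real k) * (1 + a (real k))\<^sup>2 \<le> s powr (1/4)}))"

lemma finite_cutoff_levels:
  fixes a :: "real \<Rightarrow> real"
  assumes nonneg: "\<And>x. x \<ge> 0 \<Longrightarrow> a x \<ge> 0"
  shows "finite {k. (1 + real k) * (1 + a (real k))\<^sup>2 \<le> t}"
proof (rule finite_subset)
  show "{k. (1 + real k) * (1 + a (real k))\<^sup>2 \<le> t} \<subseteq> {..nat \<lceil>t\<rceil>}"
  proof
    fix k assume "k \<in> {k. (1 + real k) * (1 + a (real k))\<^sup>2 \<le> t}"
    then have "(1 + real k) * (1 + a (real k))\<^sup>2 \<le> t" by simp
    moreover have "1 + real k \<le> (1 + real k) * (1 + a (real k))\<^sup>2"
      using nonneg[of "real k"] by (intro mult_le_cancel_left1[THEN iffD2]) (auto simp: one_le_power)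
    ultimately have "real k \<le> t" by linarith
    then show "k \<in> {..nat \<lceil>t\<rceil>}" by (simp add: le_nat_iff le_ceiling_iff)
  qed
qed simp

lemma mono_on_admission_cutoff:
  fixes a :: "real \<Rightarrow> real"
  assumes nonneg: "\<And>x. x \<ge> 0 \<Longrightarrow> a x \<ge> 0"
  shows "mono_on {0..} (admission_cutoff a)"
proof (rule mono_onI)
  fix s t :: real assume "s \<in> {0..}" "s \<le> t"
  then have "s powr (1/4) \<le> t powr (1/4)" by (intro powr_mono2) auto
  then show "admission_cutoff a s \<le> admission_cutoff a t"
    unfolding admission_cutoff_def using finite_cutoff_levels[OF nonneg]
    by (auto intro!: Max_mono)
qed

lemma filterlim_admission_cutoff_at_top:
  fixes a :: "real \<Rightarrow> real"
  assumes nonneg: "\<And>x. x \<ge> 0 \<Longrightarrow> a x \<ge> 0"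
  shows "filterlim (admission_cutoff a) at_top at_top"
  unfolding filterlim_at_top
proof
  fix Z :: real
  define K where "K = nat \<lceil>Z\<rceil>"
  define W where "W = (1 + real K) * (1 + a (real K))\<^sup>2"
  have "0 < W" unfolding W_def using nonneg[of "real K"] by (intro mult_pos_pos) auto
  show "eventually (\<lambda>s. Z \<le> admission_cutoff a s) at_top"
    using eventually_ge_at_top[of "W ^ 4"]
  proof eventually_elim
    case (elim s)
    have "W = W powr (real 4 * (1/4))" using \<open>0 < W\<close> by simp
    also have "\<dots> = (W powr real 4) powr (1/4)" by (simp only: powr_powr)
    also have "\<dots> = (W ^ 4) powr (1/4)" using \<open>0 < W\<close> by (simp only: powr_realpow)
    also have "\<dots> \<le> s powr (1/4)" using elim \<open>0 < W\<close> by (intro powr_mono2) auto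
    finally have "K \<le> Max (insert 0 {k. (1 + real k) * (1 + a (real k))\<^sup>2 \<le> s powr (1/4)})"
      using finite_cutoff_levels[OF nonneg] unfolding W_def by (intro Max_ge) auto
    then show ?case unfolding admission_cutoff_def K_def by linarith
  qed
qed

lemma admission_cutoff_bounds:
  fixes a :: "real \<Rightarrow> real"
  assumes nonneg: "\<And>x. x \<ge> 0 \<Longrightarrow> a x \<ge> 0" and m: "0 < admission_cutoff a s"
  shows "a (admission_cutoff a s) \<le> s powr (1/4)"
    and "admission_cutoff a s * (a (admission_cutoff a s))\<^sup>2 \<le> s powr (1/4)"
proof -
  define L where "L = {k. (1 + real k) * (1 + a (real k))\<^sup>2 \<le> s powr (1/4)}"
  have "Max (insert 0 L) \<in> insert 0 L"
    using finite_cutoff_levels[OF nonneg] by (intro Max_in) (auto simp: L_def)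
  with m have "(1 + admission_cutoff a s) * (1 + a (admission_cutoff a s))\<^sup>2 \<le> s powr (1/4)"
    unfolding admission_cutoff_def L_def[symmetric] by (auto simp: L_def)
  moreover define x where "x = a (admission_cutoff a s)"
  ultimately have weight: "(1 + admission_cutoff a s) * (1 + x)\<^sup>2 \<le> s powr (1/4)" by simp
  have "0 \<le> x" using nonneg m by (simp add: x_def)
  have "x \<le> (1 + x)\<^sup>2" using self_le_power[of "1 + x" 2] \<open>0 \<le> x\<close> by simp
  also have "\<dots> \<le> (1 + admission_cutoff a s) * (1 + x)\<^sup>2"
    using mult_right_mono[of 1 "1 + admission_cutoff a s" "(1 + x)\<^sup>2"] m by simp
  finally show "a (admission_cutoff a s) \<le> s powr (1/4)" using weight by (simp add: x_def)
  have "admission_cutoff a s * x\<^sup>2 \<le> (1 + admission_cutoff a s) * (1 + x)\<^sup>2"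
    using \<open>0 \<le> x\<close> m by (intro mult_mono power_mono) auto
  then show "admission_cutoff a s * (a (admission_cutoff a s))\<^sup>2 \<le> s powr (1/4)"
    using weight by (simp add: x_def)
qed

lemma admission_q_error_below_cutoff:
  fixes a :: "real \<Rightarrow> real"
  assumes nonneg: "\<And>x. x \<ge> 0 \<Longrightarrow> a x \<ge> 0" and mono: "mono_on {0..} a"
    and "1 \<le> s" and n: "real n + 1 \<le> sqrt s * admission_cutoff a s"
  shows "\<bar>admission_q a s n - admission_f a ((real n + 1) / sqrt s)\<bar>
           \<le> 2 * s powr (-1/4) * admission_f a ((real n + 1) / sqrt s)"
proof -
  define m where "m = admission_cutoff a s"
  define r where "r = s powr (1/4)"
  define h where "h = 1 / sqrt s"
  have "1 \<le> r" unfolding r_def using \<open>1 \<le> s\<close> by (intro ge_one_powr_ge_zero) auto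
  have "sqrt s = r\<^sup>2"
    using \<open>1 \<le> s\<close> by (simp add: r_def power2_eq_square powr_half_sqrt flip: powr_add)
  then have h: "0 < h" "r * h = 1 / r"
    using \<open>1 \<le> r\<close> by (auto simp: h_def power2_eq_square)
  have "0 < sqrt s * m" using n by (simp add: m_def)
  then have "0 < m" using \<open>1 \<le> s\<close> by (simp add: zero_less_mult_iff)
  note bounds = admission_cutoff_bounds[of a s, OF nonneg \<open>0 < m\<close>[unfolded m_def], folded m_def r_def]
  have "(real n + 1) * h \<le> m"
    using n \<open>1 \<le> s\<close> by (simp add: m_def h_def pos_divide_le_eq mult.commute)
  moreover have "a m * h \<le> 1 / r"
    using mult_right_mono[OF bounds(1) less_imp_le[OF h(1)]] \<open>0 < m\<close> h by simp
  moreover have "(real n + 1) * (a m * h)\<^sup>2 \<le> 1 / r"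
  proof -
    have "(real n + 1) * (a m * h)\<^sup>2 = ((real n + 1) * h) * ((a m)\<^sup>2 * h)"
      by (simp add: power2_eq_square)
    also have "\<dots> \<le> m * ((a m)\<^sup>2 * h)"
      using \<open>(real n + 1) * h \<le> m\<close> h by (intro mult_right_mono) auto
    also have "\<dots> \<le> r * h"
      using mult_right_mono[OF bounds(2) less_imp_le[OF h(1)]] \<open>0 < m\<close> by simp
    finally show ?thesis using h by simp
  qed
  moreover have "1 / r \<le> 1" using \<open>1 \<le> r\<close> by simp
  ultimately have "\<bar>(\<Prod>k\<le>n. inverse (1 + a ((real k + 1) * h) * h))
                      - exp (- integral {0..(real n + 1) * h} a)\<bar>
                   \<le> 2 * (1 / r) * exp (- integral {0..(real n + 1) * h} a)"
    using prod_riemann_approx_exp_integral[of a h n m "1 / r", OF nonneg mono h(1)] by blast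
  moreover have "1 / r = s powr (-1/4)" by (simp add: r_def powr_minus_divide)
  ultimately show ?thesis
    by (simp add: admission_q_def admission_f_def h_def atLeast0AtMost)
qed

theorem proposition5p1:
  fixes a :: "real \<Rightarrow> real"
  assumes nonneg: "\<And>x. x \<ge> 0 \<Longrightarrow> a x \<ge> 0"
    and mono: "mono_on {0..} a"
  shows "\<exists>\<psi> :: real \<Rightarrow> real. mono_on {1..} \<psi> \<and> filterlim \<psi> at_top at_top \<and>
           (\<exists>C s0. \<forall>s\<ge>max 1 s0. \<forall>n::nat. real n + 1 \<le> sqrt s * \<psi> s \<longrightarrow>
              \<bar>admission_q a s n - admission_f a ((real n + 1) / sqrt s)\<bar>
                \<le> C * s powr (-1/4) * admission_f a ((real n + 1) / sqrt s))"
proof (intro exI conjI)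
  show "mono_on {1..} (admission_cutoff a)"
    using mono_on_admission_cutoff[of a, OF nonneg] by (rule mono_on_subset) auto
  show "filterlim (admission_cutoff a) at_top at_top"
    using filterlim_admission_cutoff_at_top[of a, OF nonneg] .
  show "\<forall>s\<ge>max 1 1. \<forall>n::nat. real n + 1 \<le> sqrt s * admission_cutoff a s \<longrightarrow>
          \<bar>admission_q a s n - admission_f a ((real n + 1) / sqrt s)\<bar>
            \<le> 2 * s powr (-1/4) * admission_f a ((real n + 1) / sqrt s)"
    using admission_q_error_below_cutoff[of a] nonneg mono by simp
qed

end
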